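(* Let $m\ge n$ and let $\Gamma$ be a subset of $M_{m\times n}(\mathbb{C})$ such that for any $A,B\in\Gamma$ there exists a function $p:[0,1]\rightarrow M_{m\times n}(\mathbb{C})$ whose entries are analytic functions on $[0,1]$ with $p(0)=A$, $p(1)=B$ and $p([0,1])\subset\Gamma$. Let $\Gamma_d$ be the set of matrices in $\Gamma$ whose singular values are distinct. If $\Gamma$ contains at least one matrix with distinct singular values, then $\Gamma_d$ is dense in $\Gamma$.
   Context: $M_{m\times n}(\mathbb{C})$ denotes the set of $m\times n$ complex matrices with the topology induced by the Frobenius norm; throughout $m\ge n$. The singular values of $A\in M_{m\times n}(\mathbb{C})$ are the $n$ nonnegative square roots of the eigenvalues of $A^{\ast}A$, counted with multiplicity; distinct means pairwise different. A complex-valued function is analytic on $[0,1]$ if it is the restriction of a function defined on an open interval containing $[0,1]$ which around each point is given by a convergent power series. *)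

theory Defs
  imports "HOL-Analysis.Analysis" "Jordan_Normal_Form.Schur_Decomposition"
    "HOL-Computational_Algebra.Polynomial"
begin

text \<open>Singular values of A (an m x n complex matrix): the n nonnegative square roots
  of the eigenvalues of A^* A, counted with (algebraic) multiplicity, i.e. of the
  roots of the characteristic polynomial of A^* A.\<close>
definition singular_values :: "complex mat \<Rightarrow> real multiset" where
  "singular_values A = image_mset (\<lambda>z. sqrt (Re z)) (proots (char_poly (mat_adjoint A * A)))"

definition distinct_singular_values :: "complex mat \<Rightarrow> bool" where
  "distinct_singular_values A \<longleftrightarrow> (\<forall>s. count (singular_values A) s \<le> 1)"

definition frob_dist :: "complex mat \<Rightarrow> complex mat \<Rightarrow> real" where
  "frob_dist A B = sqrt (\<Sum>i<dim_row A. \<Sum>j<dim_col A. (cmod (A $$ (i,j) - B $$ (i,j)))\<^sup>2)"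

definition analytic_on_unit_interval :: "(real \<Rightarrow> complex) \<Rightarrow> bool" where
  "analytic_on_unit_interval f \<longleftrightarrow>
     (\<exists>a b g. a < 0 \<and> 1 < b \<and> (\<forall>t\<in>{0..1}. g t = f t) \<and>
        (\<forall>x0\<in>{a<..<b}. \<exists>r>0. \<exists>c :: nat \<Rightarrow> complex.
            \<forall>x. \<bar>x - x0\<bar> < r \<longrightarrow> (\<lambda>k. c k * of_real ((x - x0) ^ k)) sums g x))"

end

(*
  The eigenvalues of A^* A are nonnegative reals and the square root is injective on them, so A
  has distinct singular values iff the characteristic polynomial of A^* A is squarefree, i.e. iff
  the resultant D(A) of that polynomial and its derivative is nonzero; D(A) is a polynomial in
  the entries of A and their conjugates.  Along an analytic path p in Gamma from A to a matrix
  with distinct singular values, the entries of p and their conjugates extend holomorphically to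
  a complex neighbourhood of each point of [0,1], hence so does t -> D(p t).  If D(p t) vanished
  for all t below s = inf {t. D(p t) ~= 0} and s > 0, the identity theorem would make it vanish
  on a neighbourhood of s, contradicting the choice of s.  Hence D(p t) ~= 0 for arbitrarily
  small t, and these p t lie in Gamma_d and tend to p 0 = A.
*)

theory Submission
  imports Defs "Subresultants.Subresultant_Gcd" "HOL-Complex_Analysis.Conformal_Mappings"
    "HOL-Computational_Algebra.Field_as_Ring"
begin

section \<open>Singular values and the discriminant of the Gram matrix\<close>

lemma mat_adjoint_carrier: "B \<in> carrier_mat m n \<Longrightarrow> mat_adjoint B \<in> carrier_mat n m"
  unfolding mat_adjoint_def by auto

lemma index_mat_adjoint:
  "B \<in> carrier_mat m n \<Longrightarrow> i < n \<Longrightarrow> j < m \<Longrightarrow> mat_adjoint B $$ (i,j) = cnj (B $$ (j,i))"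
  unfolding mat_adjoint_def by (auto simp: mat_of_rows_index)

lemma index_mat_adjoint_mult:
  fixes B :: "complex mat"
  assumes B: "B \<in> carrier_mat m n" and "i < n" "j < n"
  shows "(mat_adjoint B * B) $$ (i,j) = (\<Sum>l<m. cnj (B $$ (l,i)) * B $$ (l,j))"
  using assms mat_adjoint_carrier[OF B]
  by (simp add: scalar_prod_def atLeast0LessThan index_mat_adjoint)

lemma cscalar_prod_mat_adjoint:
  fixes B :: "complex mat"
  assumes B: "B \<in> carrier_mat m n" and w: "w \<in> carrier_vec m" and v: "v \<in> carrier_vec n"
  shows "(mat_adjoint B *\<^sub>v w) \<bullet>c v = w \<bullet>c (B *\<^sub>v v)"
proof -
  have "(mat_adjoint B *\<^sub>v w) \<bullet>c v = (\<Sum>i<n. \<Sum>l<m. cnj (B $$ (l,i)) * w $ l * cnj (v $ i))"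
    using assms mat_adjoint_carrier[OF B]
    by (simp add: scalar_prod_def atLeast0LessThan index_mat_adjoint sum_distrib_right)
  also have "\<dots> = (\<Sum>l<m. \<Sum>i<n. w $ l * cnj (B $$ (l,i) * v $ i))"
    by (subst sum.swap) (simp add: mult_ac)
  also have "\<dots> = w \<bullet>c (B *\<^sub>v v)"
    using assms by (simp add: scalar_prod_def atLeast0LessThan sum_distrib_left cnj_sum)
  finally show ?thesis .
qed

lemma eigenvalue_mat_adjoint_mult_nonneg:
  fixes B :: "complex mat"
  assumes B: "B \<in> carrier_mat m n" and "eigenvalue (mat_adjoint B * B) a"
  shows "a \<ge> 0"
proof -
  have BB: "mat_adjoint B * B \<in> carrier_mat n n"
    using B mat_adjoint_carrier[OF B] by auto
  obtain v where v: "v \<in> carrier_vec n" "v \<noteq> 0\<^sub>v n" and ev: "(mat_adjoint B * B) *\<^sub>v v = a \<cdot>\<^sub>v v"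
    using assms(2) BB unfolding eigenvalue_def eigenvector_def by auto
  have "a * (v \<bullet>c v) = (a \<cdot>\<^sub>v v) \<bullet>c v"
    using v by (simp add: smult_scalar_prod_distrib[of _ n])
  also have "\<dots> = (B *\<^sub>v v) \<bullet>c (B *\<^sub>v v)"
    using B v mat_adjoint_carrier[OF B]
    by (simp flip: ev add: assoc_mult_mat_vec[of _ n m _ n] cscalar_prod_mat_adjoint[of _ m n])
  finally have "a * (v \<bullet>c v) \<ge> 0" by auto
  moreover have "v \<bullet>c v > 0" using v by simp
  ultimately show "a \<ge> 0"
    by (auto simp: less_eq_complex_def less_complex_def zero_le_mult_iff)
qed

lemma count_image_mset_le_1_iff:
  assumes inj: "inj_on h (set_mset M)"
  shows "(\<forall>s. count (image_mset h M) s \<le> 1) \<longleftrightarrow> (\<forall>a. count M a \<le> 1)"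
proof
  assume "\<forall>s. count (image_mset h M) s \<le> 1"
  moreover have "count M a \<le> count (image_mset h M) (h a)" for a
    by (induction M) auto
  ultimately show "\<forall>a. count M a \<le> 1"
    using le_trans by blast
next
  assume M: "\<forall>a. count M a \<le> 1"
  show "\<forall>s. count (image_mset h M) s \<le> 1"
  proof
    fix s
    have "h -` {s} \<inter> set_mset M = {} \<or> (\<exists>a. h -` {s} \<inter> set_mset M = {a})"
      using inj unfolding inj_on_def by blast
    then show "count (image_mset h M) s \<le> 1"
      using M unfolding count_image_mset by auto
  qed
qed

lemma resultant_eq_0_iff_common_root:
  fixes f g :: "complex poly"
  assumes "f \<noteq> 0"
  shows "resultant f g = 0 \<longleftrightarrow> (\<exists>a. poly f a = 0 \<and> poly g a = 0)"
proof -
  have root_gcd: "poly (gcd f g) a = 0 \<longleftrightarrow> poly f a = 0 \<and> poly g a = 0" for a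
    by (simp add: poly_eq_0_iff_dvd)
  have "gcd f g \<noteq> 0" using assms by simp
  have "degree (gcd f g) \<noteq> 0 \<longleftrightarrow> (\<exists>a. poly (gcd f g) a = 0)"
  proof
    assume "degree (gcd f g) \<noteq> 0"
    then have "\<not> constant (poly (gcd f g))"
      by (simp add: constant_degree)
    then show "\<exists>a. poly (gcd f g) a = 0"
      using Fundamental_Theorem_Algebra.fundamental_theorem_of_algebra by blast
  next
    assume root: "\<exists>a. poly (gcd f g) a = 0"
    show "degree (gcd f g) \<noteq> 0"
    proof
      assume "degree (gcd f g) = 0"
      then obtain c where "gcd f g = [:c:]"
        by (rule degree_eq_zeroE)
      then show False
        using root \<open>gcd f g \<noteq> 0\<close> by auto
    qed
  qed
  then show ?thesis
    unfolding resultant_0_gcd root_gcd .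
qed

lemma resultant_pderiv_nonzero_iff:
  fixes f :: "complex poly"
  assumes "f \<noteq> 0"
  shows "resultant f (pderiv f) \<noteq> 0 \<longleftrightarrow> (\<forall>a. count (proots f) a \<le> 1)"
proof -
  have "resultant f (pderiv f) \<noteq> 0 \<longleftrightarrow> rsquarefree f"
    unfolding resultant_eq_0_iff_common_root[OF assms] rsquarefree_roots by blast
  also have "\<dots> \<longleftrightarrow> (\<forall>a. count (proots f) a \<le> 1)"
    unfolding rsquarefree_def count_proots[OF assms] using assms by (auto simp: le_Suc_eq)
  finally show ?thesis .
qed

definition gram_discriminant :: "complex mat \<Rightarrow> complex" where
  "gram_discriminant B =
     resultant (char_poly (mat_adjoint B * B)) (pderiv (char_poly (mat_adjoint B * B)))"

lemma distinct_singular_values_iff_gram_discriminant: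
  fixes B :: "complex mat"
  assumes B: "B \<in> carrier_mat m n"
  shows "distinct_singular_values B \<longleftrightarrow> gram_discriminant B \<noteq> 0"
proof -
  define f where "f = char_poly (mat_adjoint B * B)"
  have BB: "mat_adjoint B * B \<in> carrier_mat n n"
    using B mat_adjoint_carrier[OF B] by auto
  have "f \<noteq> 0"
    using degree_monic_char_poly[OF BB] unfolding f_def by auto
  have "z \<ge> 0" if "z \<in># proots f" for z
  proof (rule eigenvalue_mat_adjoint_mult_nonneg[OF B])
    show "eigenvalue (mat_adjoint B * B) z"
      using that \<open>f \<noteq> 0\<close> unfolding eigenvalue_root_char_poly[OF BB] f_def by simp
  qed
  then have "inj_on (\<lambda>z. sqrt (Re z)) (set_mset (proots f))"
    by (intro inj_onI) (simp add: less_eq_complex_def complex_eq_iff)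
  then have "distinct_singular_values B \<longleftrightarrow> (\<forall>a. count (proots f) a \<le> 1)"
    unfolding distinct_singular_values_def singular_values_def f_def[symmetric]
    by (rule count_image_mset_le_1_iff)
  then show ?thesis
    unfolding gram_discriminant_def f_def[symmetric] resultant_pderiv_nonzero_iff[OF \<open>f \<noteq> 0\<close>] .
qed

section \<open>Polynomials with holomorphic coefficients\<close>

definition coeffs_holomorphic_on :: "(complex \<Rightarrow> complex poly) \<Rightarrow> complex set \<Rightarrow> bool" where
  "coeffs_holomorphic_on P U \<longleftrightarrow> (\<forall>k. (\<lambda>z. coeff (P z) k) holomorphic_on U)"

lemma coeffs_holomorphic_on_const: "coeffs_holomorphic_on (\<lambda>z. p) U"
  unfolding coeffs_holomorphic_on_def by simp

lemma coeffs_holomorphic_on_const_poly: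
  assumes "f holomorphic_on U"
  shows "coeffs_holomorphic_on (\<lambda>z. [:f z:]) U"
  unfolding coeffs_holomorphic_on_def
proof
  fix k
  show "(\<lambda>z. coeff [:f z:] k) holomorphic_on U"
    using assms by (cases k) simp_all
qed

lemma coeffs_holomorphic_on_add:
  "coeffs_holomorphic_on P U \<Longrightarrow> coeffs_holomorphic_on Q U \<Longrightarrow> coeffs_holomorphic_on (\<lambda>z. P z + Q z) U"
  unfolding coeffs_holomorphic_on_def by (auto intro: holomorphic_intros)

lemma coeffs_holomorphic_on_mult:
  "coeffs_holomorphic_on P U \<Longrightarrow> coeffs_holomorphic_on Q U \<Longrightarrow> coeffs_holomorphic_on (\<lambda>z. P z * Q z) U"
  unfolding coeffs_holomorphic_on_def coeff_mult by (auto intro!: holomorphic_intros)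

lemma coeffs_holomorphic_on_pderiv:
  "coeffs_holomorphic_on P U \<Longrightarrow> coeffs_holomorphic_on (\<lambda>z. pderiv (P z)) U"
  unfolding coeffs_holomorphic_on_def coeff_pderiv by (auto intro!: holomorphic_intros)

lemma det_closed:
  fixes P :: "('a \<Rightarrow> 'b :: comm_ring_1) \<Rightarrow> bool"
  assumes const: "\<And>c. P (\<lambda>z. c)"
    and add: "\<And>f g. P f \<Longrightarrow> P g \<Longrightarrow> P (\<lambda>z. f z + g z)"
    and mult: "\<And>f g. P f \<Longrightarrow> P g \<Longrightarrow> P (\<lambda>z. f z * g z)"
    and M: "\<And>z. M z \<in> carrier_mat n n"
    and entries: "\<And>i j. i < n \<Longrightarrow> j < n \<Longrightarrow> P (\<lambda>z. M z $$ (i,j))"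
  shows "P (\<lambda>z. det (M z))"
proof -
  have sum: "P (\<lambda>z. \<Sum>a\<in>A. f a z)" if "finite A" "\<And>a. a \<in> A \<Longrightarrow> P (f a)" for A f
    using that by (induction A rule: finite_induct) (auto intro: const add)
  have prod: "P (\<lambda>z. \<Prod>a\<in>A. f a z)" if "finite A" "\<And>a. a \<in> A \<Longrightarrow> P (f a)" for A f
    using that by (induction A rule: finite_induct) (auto intro: const mult)
  have "P (\<lambda>z. \<Sum>p | p permutes {0..<n}. of_int (sign p) * (\<Prod>i = 0..<n. M z $$ (i, p i)))"
  proof (intro sum mult const prod)
    fix p i assume "p \<in> {p. p permutes {0..<n}}" "i \<in> {0..<n}"
    then show "P (\<lambda>z. M z $$ (i, p i))"
      by (intro entries) (auto dest: permutes_in_image)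
  qed (simp_all add: finite_permutations)
  then show ?thesis
    by (simp add: det_def'[OF M])
qed

lemma coeffs_holomorphic_on_char_poly:
  assumes N: "\<And>z. N z \<in> carrier_mat n n"
    and entries: "\<And>i j. i < n \<Longrightarrow> j < n \<Longrightarrow> (\<lambda>z. N z $$ (i,j)) holomorphic_on U"
  shows "coeffs_holomorphic_on (\<lambda>z. char_poly (N z)) U"
  unfolding char_poly_def
proof (rule det_closed[where P = "\<lambda>P. coeffs_holomorphic_on P U"])
  show "char_poly_matrix (N z) \<in> carrier_mat n n" for z
    using N by simp
  fix i j assume ij: "i < n" "j < n"
  have "char_poly_matrix (N z) $$ (i,j) = (if i = j then [:0,1:] else 0) + [:- N z $$ (i,j):]" for z
    using N[of z] ij unfolding char_poly_matrix_def by auto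
  moreover have "coeffs_holomorphic_on (\<lambda>z. (if i = j then [:0,1:] else 0) + [:- N z $$ (i,j):]) U"
    by (intro coeffs_holomorphic_on_add coeffs_holomorphic_on_const coeffs_holomorphic_on_const_poly
        holomorphic_intros entries ij)
  ultimately show "coeffs_holomorphic_on (\<lambda>z. char_poly_matrix (N z) $$ (i,j)) U"
    by simp
qed (use coeffs_holomorphic_on_const coeffs_holomorphic_on_add coeffs_holomorphic_on_mult in blast)+

lemma holomorphic_on_resultant:
  assumes "coeffs_holomorphic_on P U" "coeffs_holomorphic_on Q U"
    and "\<And>z. degree (P z) = d" "\<And>z. degree (Q z) = e"
  shows "(\<lambda>z. resultant (P z) (Q z)) holomorphic_on U"
proof -
  have "(\<lambda>z. det (sylvester_mat_sub d e (P z) (Q z))) holomorphic_on U"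
  proof (rule det_closed[where P = "\<lambda>f. f holomorphic_on U"])
    show "sylvester_mat_sub d e (P z) (Q z) \<in> carrier_mat (d + e) (d + e)" for z
      by (rule sylvester_mat_sub_carrier)
    fix i j assume ij: "i < d + e" "j < d + e"
    show "(\<lambda>z. sylvester_mat_sub d e (P z) (Q z) $$ (i, j)) holomorphic_on U"
      unfolding sylvester_mat_sub_index[OF ij] using assms(1,2) unfolding coeffs_holomorphic_on_def
      by (cases "i < e"; cases "i \<le> j \<and> j - i \<le> d"; cases "i - e \<le> j \<and> j \<le> i") auto
  qed (use holomorphic_on_const holomorphic_on_add holomorphic_on_mult in blast)+
  then show ?thesis
    unfolding resultant_sub resultant_sub_def assms(3,4) .
qed

lemma holomorphic_on_resultant_char_poly_pderiv:
  assumes N: "\<And>z. N z \<in> carrier_mat n n"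
    and entries: "\<And>i j. i < n \<Longrightarrow> j < n \<Longrightarrow> (\<lambda>z. N z $$ (i,j)) holomorphic_on U"
  shows "(\<lambda>z. resultant (char_poly (N z)) (pderiv (char_poly (N z)))) holomorphic_on U"
proof (rule holomorphic_on_resultant)
  show "coeffs_holomorphic_on (\<lambda>z. char_poly (N z)) U"
    by (rule coeffs_holomorphic_on_char_poly[OF N entries])
  then show "coeffs_holomorphic_on (\<lambda>z. pderiv (char_poly (N z))) U"
    by (rule coeffs_holomorphic_on_pderiv)
  show "degree (char_poly (N z)) = n" for z
    using degree_monic_char_poly[OF N] by simp
  then show "degree (pderiv (char_poly (N z))) = n - 1" for z
    by (simp add: degree_pderiv)
qed

section \<open>Holomorphic extension of functions on the unit interval\<close>

definition extends_holomorphically_at :: "real \<Rightarrow> (real \<Rightarrow> complex) \<Rightarrow> bool" where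
  "extends_holomorphically_at s f \<longleftrightarrow>
     (\<exists>r>0. \<exists>F. F holomorphic_on ball (complex_of_real s) r \<and>
        (\<forall>x\<in>{0..1}. \<bar>x - s\<bar> < r \<longrightarrow> F (complex_of_real x) = f x))"

lemma holomorphic_on_powser_ball:
  fixes c :: "nat \<Rightarrow> complex" and g :: "real \<Rightarrow> complex"
  assumes sums: "\<And>x. \<bar>x - x0\<bar> < r \<Longrightarrow> (\<lambda>k. c k * of_real ((x - x0) ^ k)) sums g x"
  obtains G where "G holomorphic_on ball (complex_of_real x0) r"
    and "\<And>x. \<bar>x - x0\<bar> < r \<Longrightarrow> G (of_real x) = g x"
proof
  have sums': "(\<lambda>k. c k * of_real (x - x0) ^ k) sums g x" if "\<bar>x - x0\<bar> < r" for x
    using sums[OF that] by (simp add: of_real_power)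
  have "ereal r \<le> fps_conv_radius (Abs_fps c)"
    unfolding fps_conv_radius_def
  proof (rule conv_radius_geI_ex')
    fix \<rho> :: real assume "0 < \<rho>" "ereal \<rho> < ereal r"
    then have "\<bar>(x0 + \<rho>) - x0\<bar> < r" by simp
    from sums_summable[OF sums'[OF this]] show "summable (\<lambda>k. fps_nth (Abs_fps c) k * of_real \<rho> ^ k)"
      by simp
  qed
  then have "ereal (norm w) < fps_conv_radius (Abs_fps c)" if "norm w < r" for w :: complex
    using that by (metis ereal_less_eq(3) order_less_le_trans less_ereal.simps(1))
  then have "(\<lambda>z. z - complex_of_real x0) ` ball (complex_of_real x0) r
      \<subseteq> eball 0 (fps_conv_radius (Abs_fps c))"
    by (auto simp: dist_norm norm_minus_commute)
  then show "(\<lambda>z. eval_fps (Abs_fps c) (z - complex_of_real x0)) holomorphic_on ball (complex_of_real x0) r"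
    by (intro holomorphic_on_compose_gen[unfolded comp_def, OF _ holomorphic_on_eval_fps[OF order.refl]]
        holomorphic_intros)
  show "eval_fps (Abs_fps c) (of_real x - complex_of_real x0) = g x" if "\<bar>x - x0\<bar> < r" for x
    using sums'[OF that] by (simp add: eval_fps_def sums_iff flip: of_real_diff)
qed

lemma analytic_on_unit_interval_cnj:
  assumes "analytic_on_unit_interval f"
  shows "analytic_on_unit_interval (\<lambda>t. cnj (f t))"
proof -
  obtain a b g where "a < 0" "1 < b" and g: "\<forall>t\<in>{0..1}. g t = f t"
    and local_powser: "\<forall>x0\<in>{a<..<b}. \<exists>r>0. \<exists>c :: nat \<Rightarrow> complex.
        \<forall>x. \<bar>x - x0\<bar> < r \<longrightarrow> (\<lambda>k. c k * of_real ((x - x0) ^ k)) sums g x"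
    using assms unfolding analytic_on_unit_interval_def by blast
  have "\<forall>x0\<in>{a<..<b}. \<exists>r>0. \<exists>c :: nat \<Rightarrow> complex.
      \<forall>x. \<bar>x - x0\<bar> < r \<longrightarrow> (\<lambda>k. c k * of_real ((x - x0) ^ k)) sums cnj (g x)"
  proof
    fix x0 assume "x0 \<in> {a<..<b}"
    obtain r c where "r > 0"
      and sums: "\<forall>x. \<bar>x - x0\<bar> < r \<longrightarrow> (\<lambda>k. c k * of_real ((x - x0) ^ k)) sums g x"
      using bspec[OF local_powser \<open>x0 \<in> {a<..<b}\<close>] by (elim exE conjE) (rule that)
    have "\<forall>x. \<bar>x - x0\<bar> < r \<longrightarrow> (\<lambda>k. cnj (c k) * of_real ((x - x0) ^ k)) sums cnj (g x)"
    proof (intro allI impI)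
      fix x assume "\<bar>x - x0\<bar> < r"
      then have "(\<lambda>k. c k * of_real ((x - x0) ^ k)) sums g x"
        using sums by blast
      then have "(\<lambda>k. cnj (c k * of_real ((x - x0) ^ k))) sums cnj (g x)"
        by (rule sums_cnj[THEN iffD2])
      then show "(\<lambda>k. cnj (c k) * of_real ((x - x0) ^ k)) sums cnj (g x)"
        by simp
    qed
    then show "\<exists>r>0. \<exists>c :: nat \<Rightarrow> complex.
        \<forall>x. \<bar>x - x0\<bar> < r \<longrightarrow> (\<lambda>k. c k * of_real ((x - x0) ^ k)) sums cnj (g x)"
      using \<open>r > 0\<close> by (intro exI[of _ r] exI[of _ "\<lambda>k. cnj (c k)"] conjI)
  qed
  then show ?thesis
    unfolding analytic_on_unit_interval_def using \<open>a < 0\<close> \<open>1 < b\<close> g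
    by (intro exI[of _ a] exI[of _ b] exI[of _ "\<lambda>t. cnj (g t)"] conjI) auto
qed

lemma analytic_on_unit_interval_imp_extends_holomorphically:
  assumes "analytic_on_unit_interval f" "s \<in> {0..1}"
  shows "extends_holomorphically_at s f"
proof -
  obtain a b g where "a < 0" "1 < b" and g: "\<forall>t\<in>{0..1}. g t = f t"
    and local_powser: "\<forall>x0\<in>{a<..<b}. \<exists>r>0. \<exists>c :: nat \<Rightarrow> complex.
        \<forall>x. \<bar>x - x0\<bar> < r \<longrightarrow> (\<lambda>k. c k * of_real ((x - x0) ^ k)) sums g x"
    using assms(1) unfolding analytic_on_unit_interval_def by blast
  have "s \<in> {a<..<b}" using assms(2) \<open>a < 0\<close> \<open>1 < b\<close> by auto
  then obtain r c where "r > 0"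
    and sums: "\<And>x. \<bar>x - s\<bar> < r \<Longrightarrow> (\<lambda>k. c k * of_real ((x - s) ^ k)) sums g x"
    using local_powser by blast
  obtain G where "G holomorphic_on ball (complex_of_real s) r"
    and "\<And>x. \<bar>x - s\<bar> < r \<Longrightarrow> G (of_real x) = g x"
    using holomorphic_on_powser_ball[OF sums] by blast
  then show ?thesis
    unfolding extends_holomorphically_at_def using \<open>r > 0\<close> g
    by (intro exI[of _ r] exI[of _ G]) auto
qed

lemma extends_holomorphically_at_common_radius:
  assumes "finite I" "\<And>i. i \<in> I \<Longrightarrow> extends_holomorphically_at s (f i)"
  obtains r F where "r > 0"
    and "\<And>i. i \<in> I \<Longrightarrow> F i holomorphic_on ball (complex_of_real s) r"
    and "\<And>i x. i \<in> I \<Longrightarrow> x \<in> {0..1} \<Longrightarrow> \<bar>x - s\<bar> < r \<Longrightarrow> F i (complex_of_real x) = f i x"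
proof -
  obtain R F where R: "\<And>i. i \<in> I \<Longrightarrow> R i > 0"
    and F: "\<And>i. i \<in> I \<Longrightarrow> F i holomorphic_on ball (complex_of_real s) (R i)"
    and FR: "\<And>i x. i \<in> I \<Longrightarrow> x \<in> {0..1} \<Longrightarrow> \<bar>x - s\<bar> < R i \<Longrightarrow> F i (complex_of_real x) = f i x"
    using assms(2) unfolding extends_holomorphically_at_def by metis
  define r where "r = Min (insert 1 (R ` I))"
  have "r > 0" and r_le: "\<And>i. i \<in> I \<Longrightarrow> r \<le> R i"
    unfolding r_def using assms(1) R by auto
  show ?thesis
  proof (rule that)
    show "r > 0" by fact
    show "F i holomorphic_on ball (complex_of_real s) r" if "i \<in> I" for i
      using F[OF that] subset_ball[OF r_le[OF that]] by (rule holomorphic_on_subset)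
    show "F i (complex_of_real x) = f i x" if "i \<in> I" "x \<in> {0..1}" "\<bar>x - s\<bar> < r" for i x
      using FR[of i x] r_le[of i] that by simp
  qed
qed

lemma extends_holomorphically_at_imp_continuous:
  assumes "extends_holomorphically_at s f" "s \<in> {0..1}"
  shows "continuous (at s within {0..1}) f"
proof -
  obtain r F where "r > 0" and F: "F holomorphic_on ball (complex_of_real s) r"
    and Ff: "\<forall>x\<in>{0..1}. \<bar>x - s\<bar> < r \<longrightarrow> F (complex_of_real x) = f x"
    using assms(1) unfolding extends_holomorphically_at_def by blast
  have "isCont F (complex_of_real s)"
    using holomorphic_on_imp_continuous_on[OF F] \<open>r > 0\<close>
    by (simp add: continuous_on_eq_continuous_at)
  moreover have "continuous (at s within {0..1}) complex_of_real"
    by (intro continuous_intros)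
  ultimately have "continuous (at s within {0..1}) (\<lambda>x. F (complex_of_real x))"
    by (rule continuous_within_compose3)
  then show ?thesis
    by (rule continuous_transform_within[OF _ \<open>r > 0\<close> assms(2)]) (use Ff in \<open>auto simp: dist_real_def\<close>)
qed

lemma extends_holomorphically_at_vanishing_from_left:
  assumes "extends_holomorphically_at s g" "0 < s" "s \<le> 1"
    and zero_left: "\<And>t. t \<in> {0..<s} \<Longrightarrow> g t = 0"
  obtains r where "r > 0" "\<And>x. x \<in> {0..1} \<Longrightarrow> \<bar>x - s\<bar> < r \<Longrightarrow> g x = 0"
proof -
  obtain r F where "r > 0" and F: "F holomorphic_on ball (complex_of_real s) r"
    and Fg: "\<forall>x\<in>{0..1}. \<bar>x - s\<bar> < r \<longrightarrow> F (complex_of_real x) = g x"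
    using assms(1) unfolding extends_holomorphically_at_def by blast
  have in_ball: "complex_of_real x \<in> ball (complex_of_real s) r \<longleftrightarrow> \<bar>x - s\<bar> < r" for x
    by (simp add: dist_real_def abs_minus_commute)
  define a where "a = max 0 (s - r)"
  have "a < s"
    unfolding a_def using \<open>0 < s\<close> \<open>r > 0\<close> by simp
  have left_in_ball: "complex_of_real ` {a<..<s} \<subseteq> ball (complex_of_real s) r"
    unfolding a_def by (auto simp: dist_real_def)
  have limit: "complex_of_real s islimpt complex_of_real ` {a<..<s}"
    by (rule islimpt_isCont_image[OF islimpt_greaterThanLessThan2[OF \<open>a < s\<close>]])
      (simp_all add: eventually_at_filter)
  have F_left: "F z = 0" if "z \<in> complex_of_real ` {a<..<s}" for z
    using that Fg zero_left \<open>s \<le> 1\<close> unfolding a_def by auto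
  have "F z = 0" if "z \<in> ball (complex_of_real s) r" for z
    by (rule analytic_continuation[OF F open_ball connected_ball left_in_ball _ limit F_left that])
      (simp add: \<open>r > 0\<close>)
  then show ?thesis
    using \<open>r > 0\<close> Fg in_ball by (intro that[of r]) auto
qed

lemma extends_holomorphically_nonzero_near_0:
  assumes ext: "\<And>s. s \<in> {0..1} \<Longrightarrow> extends_holomorphically_at s g"
    and "t0 \<in> {0..1}" "g t0 \<noteq> 0" "\<delta> > 0"
  shows "\<exists>t\<in>{0..1}. t < \<delta> \<and> g t \<noteq> 0"
proof (rule ccontr)
  assume far: "\<not> ?thesis"
  define T where "T = {t\<in>{0..1}. g t \<noteq> 0}"
  define s where "s = Inf T"
  have "t0 \<in> T" "bdd_below T"
    using assms(2,3) unfolding T_def by auto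
  have "\<delta> \<le> t" if "t \<in> T" for t
    using that far unfolding T_def by (cases "t < \<delta>") auto
  then have "\<delta> \<le> s"
    unfolding s_def using \<open>t0 \<in> T\<close> by (intro cInf_greatest) auto
  have "s \<le> t0"
    unfolding s_def using \<open>t0 \<in> T\<close> \<open>bdd_below T\<close> by (rule cInf_lower)
  have "0 < s" "s \<le> 1" and s01: "s \<in> {0..1}"
    using \<open>\<delta> \<le> s\<close> \<open>\<delta> > 0\<close> \<open>s \<le> t0\<close> assms(2) by auto
  have zero_left: "g t = 0" if "t \<in> {0..<s}" for t
  proof (rule ccontr)
    assume "g t \<noteq> 0"
    then have "t \<in> T"
      using that \<open>s \<le> 1\<close> unfolding T_def by auto
    then have "s \<le> t"
      unfolding s_def using \<open>bdd_below T\<close> by (rule cInf_lower)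
    then show False
      using that by simp
  qed
  obtain r where "r > 0" and zero_near: "\<And>x. x \<in> {0..1} \<Longrightarrow> \<bar>x - s\<bar> < r \<Longrightarrow> g x = 0"
    using extends_holomorphically_at_vanishing_from_left[OF ext[OF s01] \<open>0 < s\<close> \<open>s \<le> 1\<close> zero_left]
    by blast
  have "s + r \<le> t" if "t \<in> T" for t
  proof -
    have "s \<le> t"
      unfolding s_def using that \<open>bdd_below T\<close> by (rule cInf_lower)
    moreover have "\<not> \<bar>t - s\<bar> < r"
      using zero_near[of t] that unfolding T_def by auto
    ultimately show ?thesis
      by simp
  qed
  then have "s + r \<le> s"
    unfolding s_def using \<open>t0 \<in> T\<close> by (intro cInf_greatest) auto
  then show False
    using \<open>r > 0\<close> by simp
qed

lemma extends_holomorphically_at_gram_discriminant: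
  fixes p :: "real \<Rightarrow> complex mat"
  assumes analytic: "\<forall>i<m. \<forall>j<n. analytic_on_unit_interval (\<lambda>t. p t $$ (i,j))"
    and carrier: "\<And>t. t \<in> {0..1} \<Longrightarrow> p t \<in> carrier_mat m n" and "s \<in> {0..1}"
  shows "extends_holomorphically_at s (\<lambda>t. gram_discriminant (p t))"
proof -
  define I where "I = {..<m} \<times> {..<n} \<times> (UNIV :: bool set)"
  define entry where "entry = (\<lambda>(i, j, b) t. if b then cnj (p t $$ (i,j)) else p t $$ (i,j))"
  have "extends_holomorphically_at s (entry e)" if e: "e \<in> I" for e
  proof -
    obtain i j b where "e = (i, j, b)" "i < m" "j < n"
      using e unfolding I_def by auto
    then show ?thesis
      using analytic \<open>s \<in> {0..1}\<close> unfolding entry_def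
      by (cases b) (auto intro!: analytic_on_unit_interval_imp_extends_holomorphically
          analytic_on_unit_interval_cnj)
  qed
  moreover have "finite I"
    unfolding I_def by simp
  ultimately obtain r E where "r > 0"
    and E: "\<And>e. e \<in> I \<Longrightarrow> E e holomorphic_on ball (complex_of_real s) r"
    and E_entry: "\<And>e x. e \<in> I \<Longrightarrow> x \<in> {0..1} \<Longrightarrow> \<bar>x - s\<bar> < r \<Longrightarrow>
        E e (complex_of_real x) = entry e x"
    using extends_holomorphically_at_common_radius[of I s entry] by blast
  define N where "N = (\<lambda>z. mat n n (\<lambda>(i,j). \<Sum>l<m. E (l, i, True) z * E (l, j, False) z))"
  have N_carrier: "N z \<in> carrier_mat n n" for z
    unfolding N_def by simp
  have "(\<lambda>z. N z $$ (i,j)) holomorphic_on ball (complex_of_real s) r" if "i < n" "j < n" for i j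
    using that E unfolding N_def I_def by (auto intro!: holomorphic_intros)
  then have holomorphic: "(\<lambda>z. resultant (char_poly (N z)) (pderiv (char_poly (N z))))
      holomorphic_on ball (complex_of_real s) r"
    by (rule holomorphic_on_resultant_char_poly_pderiv[OF N_carrier])
  have "N (complex_of_real x) = mat_adjoint (p x) * p x"
    if "x \<in> {0..1}" "\<bar>x - s\<bar> < r" for x
  proof -
    have px: "p x \<in> carrier_mat m n"
      using carrier that(1) .
    show ?thesis
    proof (rule eq_matI)
      fix i j assume "i < dim_row (mat_adjoint (p x) * p x)" "j < dim_col (mat_adjoint (p x) * p x)"
      then have "i < n" "j < n"
        using mat_adjoint_carrier[OF px] px by auto
      then show "N (complex_of_real x) $$ (i,j) = (mat_adjoint (p x) * p x) $$ (i,j)"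
        unfolding index_mat_adjoint_mult[OF px \<open>i < n\<close> \<open>j < n\<close>]
        using that by (simp add: N_def I_def E_entry entry_def)
    qed (use mat_adjoint_carrier[OF px] px in \<open>auto simp: N_def\<close>)
  qed
  then show ?thesis
    unfolding extends_holomorphically_at_def gram_discriminant_def using \<open>r > 0\<close> holomorphic
    by (intro exI[of _ r] exI[of _ "\<lambda>z. resultant (char_poly (N z)) (pderiv (char_poly (N z)))"]) auto
qed

section \<open>Density of matrices with distinct singular values\<close>

lemma continuous_frob_dist:
  assumes "A \<in> carrier_mat m n"
    and "\<And>i j. i < m \<Longrightarrow> j < n \<Longrightarrow> continuous F (\<lambda>t. p t $$ (i,j))"
  shows "continuous F (\<lambda>t. frob_dist A (p t))"
  unfolding frob_dist_def using assms by (auto simp: carrier_matD intro!: continuous_intros)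

lemma analytic_path_close_to_start:
  fixes p :: "real \<Rightarrow> complex mat"
  assumes analytic: "\<forall>i<m. \<forall>j<n. analytic_on_unit_interval (\<lambda>t. p t $$ (i,j))"
    and "p 0 \<in> carrier_mat m n" "\<epsilon> > 0"
  obtains \<delta> where "\<delta> > 0" "\<And>t. t \<in> {0..1} \<Longrightarrow> t < \<delta> \<Longrightarrow> frob_dist (p 0) (p t) < \<epsilon>"
proof -
  have "continuous (at 0 within {0..1}) (\<lambda>t. frob_dist (p 0) (p t))"
    using analytic assms(2)
    by (intro continuous_frob_dist[of "p 0" m n] extends_holomorphically_at_imp_continuous
        analytic_on_unit_interval_imp_extends_holomorphically) auto
  moreover have "frob_dist (p 0) (p 0) = 0"
    unfolding frob_dist_def by simp
  ultimately obtain \<delta> where "\<delta> > 0"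
    and "\<forall>t\<in>{0..1}. dist t 0 < \<delta> \<longrightarrow> dist (frob_dist (p 0) (p t)) 0 < \<epsilon>"
    using \<open>\<epsilon> > 0\<close> unfolding continuous_within_eps_delta by metis
  then show ?thesis
    by (intro that[of \<delta>]) (auto simp: dist_real_def)
qed

theorem theorem4p7:
  fixes m n :: nat and \<Gamma> :: "complex mat set"
  assumes "n \<le> m"
    and "\<Gamma> \<subseteq> carrier_mat m n"
    and "\<forall>A\<in>\<Gamma>. \<forall>B\<in>\<Gamma>. \<exists>p :: real \<Rightarrow> complex mat.
           (\<forall>i<m. \<forall>j<n. analytic_on_unit_interval (\<lambda>t. p t $$ (i,j))) \<and>
           p 0 = A \<and> p 1 = B \<and> p ` {0..1} \<subseteq> \<Gamma>"
    and "\<exists>A\<in>\<Gamma>. distinct_singular_values A"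
  shows "\<forall>A\<in>\<Gamma>. \<forall>\<epsilon>>0. \<exists>B\<in>{C\<in>\<Gamma>. distinct_singular_values C}. frob_dist A B < \<epsilon>"
proof (intro ballI allI impI)
  fix A :: "complex mat" and \<epsilon> :: real
  assume "A \<in> \<Gamma>" "\<epsilon> > 0"
  obtain A1 where "A1 \<in> \<Gamma>" "distinct_singular_values A1"
    using assms(4) by blast
  then obtain p :: "real \<Rightarrow> complex mat"
    where analytic: "\<forall>i<m. \<forall>j<n. analytic_on_unit_interval (\<lambda>t. p t $$ (i,j))"
      and "p 0 = A" "p 1 = A1" and path: "p ` {0..1} \<subseteq> \<Gamma>"
    using assms(3) \<open>A \<in> \<Gamma>\<close> by blast
  have carrier: "p t \<in> carrier_mat m n" if "t \<in> {0..1}" for t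
    using path assms(2) that by blast
  obtain \<delta> where "\<delta> > 0" and close: "\<And>t. t \<in> {0..1} \<Longrightarrow> t < \<delta> \<Longrightarrow> frob_dist A (p t) < \<epsilon>"
    using analytic_path_close_to_start[OF analytic carrier \<open>\<epsilon> > 0\<close>] \<open>p 0 = A\<close> by auto
  have "\<exists>t\<in>{0..1}. t < \<delta> \<and> gram_discriminant (p t) \<noteq> 0"
  proof (rule extends_holomorphically_nonzero_near_0)
    show "extends_holomorphically_at s (\<lambda>t. gram_discriminant (p t))" if "s \<in> {0..1}" for s
      by (rule extends_holomorphically_at_gram_discriminant[OF analytic carrier that])
    show "gram_discriminant (p 1) \<noteq> 0"
      using \<open>distinct_singular_values A1\<close> \<open>p 1 = A1\<close> carrier[of 1]
      by (simp add: distinct_singular_values_iff_gram_discriminant)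
  qed (use \<open>\<delta> > 0\<close> in auto)
  then obtain t where "t \<in> {0..1}" "t < \<delta>" "gram_discriminant (p t) \<noteq> 0"
    by blast
  then show "\<exists>B\<in>{C\<in>\<Gamma>. distinct_singular_values C}. frob_dist A B < \<epsilon>"
    using path close carrier[of t] distinct_singular_values_iff_gram_discriminant
    by (intro bexI[of _ "p t"]) auto
qed

end
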